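(* Consider the control-affine system $\dot x = f(x) + g(x)u$ with $f:\mathbb{R}^{n_x}\to\mathbb{R}^{n_x}$, $g:\mathbb{R}^{n_x}\to\mathbb{R}^{n_x\times n_u}$ Lipschitz and $\mathcal{C}^{m-1}$, control set $\mathcal{U}\subset\mathbb{R}^{n_u}$ compact, and a $\mathcal{C}^m$ function $h:\mathbb{R}^{n_x}\to\mathbb{R}$ of relative degree $m$. Let $\Gamma_1,\dots,\Gamma_m$ be class $\mathcal{K}$ functions with $\Gamma_i \in \mathcal{C}^{m-i}$, and define $\psi_0 = h$, $\psi_i = \dot\psi_{i-1} + \Gamma_i(\psi_{i-1})$ for $i = 1,\dots,m-1$. Let $a(x) = (L_g L_f^{m-1} h(x))^\top$ and $b(x) = -L_f^m h(x) - \sum_{i=0}^{m-1} L_f^i(\Gamma_{m-i}\circ\psi_{m-i-1})(x)$, let $u_n$ be a nominal controller, and let $\pi(x)$ be a minimizer of $\|u - u_n(x)\|_2^2$ over $u \in \mathcal{U}$ subject to $a(x)^\top u \ge b(x)$. Assume this problem is feasible and $\pi(x) \notin \partial\mathcal{U}$. If the system controlled by $\pi$ is at an equilibrium $(x_e,u_e)$, i.e. $u_e = \pi(x_e)$ and $0 = f(x_e) + g(x_e)u_e$, then either (i) $u_n(x_e) = u_e$, or (ii) $h(x_e) = 0$.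
   Context: $h$ has relative degree $m$ means $L_g L_f^{i} h \equiv 0$ for $i = 0,\dots,m-2$ (so that the $m$-th time derivative of $h$ along the system is the first to depend on $u$, namely $\dot\psi_{m-1} + \Gamma_m(\psi_{m-1}) = L_f^m h + L_g L_f^{m-1}h\, u + \sum_{i=0}^{m-1} L_f^i(\Gamma_{m-i}\circ\psi_{m-i-1})$). Derivatives $\dot\psi_i$ are along the system trajectories. A class $\mathcal{K}$ function is continuous, strictly increasing, with value $0$ at $0$. $\partial\mathcal{U}$ denotes the boundary of $\mathcal{U}$. *)

theory Defs
  imports "HOL-Analysis.Analysis"
begin

fun Ck :: "nat \<Rightarrow> ('a::real_normed_vector \<Rightarrow> real) \<Rightarrow> bool" where
  "Ck 0 \<phi> = continuous_on UNIV \<phi>"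
| "Ck (Suc k) \<phi> = ((\<forall>x. \<phi> differentiable (at x)) \<and>
                    (\<forall>v. Ck k (\<lambda>x. frechet_derivative \<phi> (at x) v)))"

text \<open>Class K function (on the whole real line, as needed since psi may be negative).\<close>
definition class_K :: "(real \<Rightarrow> real) \<Rightarrow> bool" where
  "class_K \<Gamma> \<longleftrightarrow> continuous_on UNIV \<Gamma> \<and> strict_mono \<Gamma> \<and> \<Gamma> 0 = 0"

definition lie :: "(real^'n \<Rightarrow> real^'n) \<Rightarrow> (real^'n \<Rightarrow> real) \<Rightarrow> real^'n \<Rightarrow> real" where
  "lie F \<phi> x = frechet_derivative \<phi> (at x) (F x)"

definition lie_g :: "(real^'n \<Rightarrow> real^'m^'n) \<Rightarrow> (real^'n \<Rightarrow> real) \<Rightarrow> real^'n \<Rightarrow> real^'m" where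
  "lie_g g \<phi> x = (\<chi> j. frechet_derivative \<phi> (at x) (column j (g x)))"

text \<open>psi_0 = h, psi_i = dpsi_{i-1}/dt + Gamma_i(psi_{i-1}); for i <= m-1 the time
  derivative along the system equals L_f psi_{i-1} (the L_g term vanishes by relative degree).\<close>
primrec psi :: "(real^'n \<Rightarrow> real^'n) \<Rightarrow> (real^'n \<Rightarrow> real) \<Rightarrow> (nat \<Rightarrow> real \<Rightarrow> real)
                 \<Rightarrow> nat \<Rightarrow> real^'n \<Rightarrow> real" where
  "psi f h \<Gamma> 0 = h"
| "psi f h \<Gamma> (Suc i) = (\<lambda>x. lie f (psi f h \<Gamma> i) x + \<Gamma> (Suc i) (psi f h \<Gamma> i x))"

end

theory Submission
  imports Defs
begin

text \<open>
  At an equilibrium, \<open>f x\<^sub>e = - g x\<^sub>e u\<^sub>e\<close>, so \<open>L\<^sub>f \<phi> (x\<^sub>e) = - L\<^sub>g \<phi> (x\<^sub>e) \<cdot> u\<^sub>e\<close> for every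
  differentiable \<open>\<phi>\<close>. By the relative degree assumption \<open>L\<^sub>g\<close> annihilates every smooth
  function of \<open>h, L\<^sub>f h, \<dots>, L\<^sub>f\<^sup>m\<^sup>-\<^sup>2 h\<close>; the functions \<open>\<psi>\<^sub>0, \<dots>, \<psi>\<^sub>m\<^sub>-\<^sub>2\<close> and
  \<open>L\<^sub>f\<^sup>i\<^sup>-\<^sup>1 (\<Gamma>\<^sub>m\<^sub>-\<^sub>i \<circ> \<psi>\<^sub>m\<^sub>-\<^sub>i\<^sub>-\<^sub>1)\<close> are of this kind, so their \<open>L\<^sub>f\<close>-derivatives vanish at
  \<open>x\<^sub>e\<close>. Hence \<open>a(x\<^sub>e) \<cdot> u\<^sub>e = - L\<^sub>f\<^sup>m h(x\<^sub>e)\<close> and \<open>b(x\<^sub>e) = - L\<^sub>f\<^sup>m h(x\<^sub>e) - \<Gamma>\<^sub>m(\<psi>\<^sub>m\<^sub>-\<^sub>1(x\<^sub>e))\<close>.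

  If \<open>u\<^sub>n(x\<^sub>e) \<noteq> u\<^sub>e\<close>, the constraint must be active at the interior minimizer \<open>u\<^sub>e\<close>,
  since otherwise a small step towards \<open>u\<^sub>n(x\<^sub>e)\<close> stays feasible and lowers the cost.
  So \<open>\<Gamma>\<^sub>m(\<psi>\<^sub>m\<^sub>-\<^sub>1(x\<^sub>e)) = 0\<close>, i.e. \<open>\<psi>\<^sub>m\<^sub>-\<^sub>1(x\<^sub>e) = 0\<close>, and descending through
  \<open>\<psi>\<^sub>i = L\<^sub>f \<psi>\<^sub>i\<^sub>-\<^sub>1 + \<Gamma>\<^sub>i(\<psi>\<^sub>i\<^sub>-\<^sub>1)\<close> gives \<open>h(x\<^sub>e) = \<psi>\<^sub>0(x\<^sub>e) = 0\<close>.
\<close>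

lemma frechet_derivative_add_at:
  assumes "\<phi> differentiable (at x)" "\<psi> differentiable (at x)"
  shows "frechet_derivative (\<lambda>x. \<phi> x + \<psi> x) (at x) v
           = frechet_derivative \<phi> (at x) v + frechet_derivative \<psi> (at x) v"
  by (simp add: frechet_derivative_at[OF has_derivative_add[OF assms[unfolded frechet_derivative_works]],
        symmetric])

lemma frechet_derivative_mult_at:
  fixes \<phi> \<psi> :: "'a::real_normed_vector \<Rightarrow> real"
  assumes "\<phi> differentiable (at x)" "\<psi> differentiable (at x)"
  shows "frechet_derivative (\<lambda>x. \<phi> x * \<psi> x) (at x) v
           = \<phi> x * frechet_derivative \<psi> (at x) v + frechet_derivative \<phi> (at x) v * \<psi> x"
  by (simp add: frechet_derivative_at[OF has_derivative_mult[OF assms[unfolded frechet_derivative_works]],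
        symmetric])

lemma frechet_derivative_compose_real:
  fixes \<Gamma> :: "real \<Rightarrow> real"
  assumes "\<phi> differentiable (at x)" "\<Gamma> differentiable (at (\<phi> x))"
  shows "frechet_derivative (\<lambda>y. \<Gamma> (\<phi> y)) (at x) v
           = frechet_derivative \<phi> (at x) v * frechet_derivative \<Gamma> (at (\<phi> x)) 1"
proof -
  have lin: "linear (frechet_derivative \<Gamma> (at (\<phi> x)))"
    using assms(2) frechet_derivative_works has_derivative_linear by blast
  have "frechet_derivative (\<lambda>y. \<Gamma> (\<phi> y)) (at x) v
          = frechet_derivative \<Gamma> (at (\<phi> x)) (frechet_derivative \<phi> (at x) v *\<^sub>R 1)"
    using frechet_derivative_compose[OF assms] by (simp add: comp_def)
  then show ?thesis
    unfolding linear_scale[OF lin] by simp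
qed

lemma Ck_differentiable: "Ck k \<phi> \<Longrightarrow> 1 \<le> k \<Longrightarrow> \<phi> differentiable (at x)"
  by (cases k) auto

lemma Ck_Suc_imp_Ck: "Ck (Suc k) \<phi> \<Longrightarrow> Ck k \<phi>"
proof (induction k arbitrary: \<phi>)
  case 0
  then show ?case
    by (simp add: continuous_at_imp_continuous_on differentiable_imp_continuous_within)
next
  case (Suc k)
  then show ?case
    by (metis Ck.simps(2))
qed

lemma Ck_mono: "Ck l \<phi> \<Longrightarrow> k \<le> l \<Longrightarrow> Ck k \<phi>"
proof (induction l)
  case (Suc l)
  then show ?case
    by (metis Ck_Suc_imp_Ck le_Suc_eq)
qed simp

lemma Ck_const: "Ck k (\<lambda>x. c)"
  by (induction k arbitrary: c) auto

lemma Ck_add: "Ck k \<phi> \<Longrightarrow> Ck k \<psi> \<Longrightarrow> Ck k (\<lambda>x. \<phi> x + \<psi> x)"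
  by (induction k arbitrary: \<phi> \<psi>) (auto simp: continuous_on_add frechet_derivative_add_at)

lemma Ck_mult:
  fixes \<phi> \<psi> :: "'a::real_normed_vector \<Rightarrow> real"
  shows "Ck k \<phi> \<Longrightarrow> Ck k \<psi> \<Longrightarrow> Ck k (\<lambda>x. \<phi> x * \<psi> x)"
proof (induction k arbitrary: \<phi> \<psi>)
  case (Suc k)
  have "Ck k \<phi>" "Ck k \<psi>"
    using Suc.prems by (blast intro: Ck_Suc_imp_Ck)+
  with Suc have
    "Ck k (\<lambda>x. \<phi> x * frechet_derivative \<psi> (at x) v + frechet_derivative \<phi> (at x) v * \<psi> x)" for v
    by (intro Ck_add Suc.IH) simp_all
  with Suc.prems show ?case
    by (simp add: frechet_derivative_mult_at)
qed (simp add: continuous_on_mult)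

lemma Ck_sum: "finite S \<Longrightarrow> (\<And>i. i \<in> S \<Longrightarrow> Ck k (F i)) \<Longrightarrow> Ck k (\<lambda>x. \<Sum>i\<in>S. F i x)"
  by (induction S rule: finite_induct) (auto intro: Ck_add Ck_const)

lemma Ck_compose:
  fixes \<Gamma> :: "real \<Rightarrow> real" and \<phi> :: "'a::real_normed_vector \<Rightarrow> real"
  shows "Ck k \<Gamma> \<Longrightarrow> Ck k \<phi> \<Longrightarrow> Ck k (\<lambda>x. \<Gamma> (\<phi> x))"
proof (induction k arbitrary: \<Gamma> \<phi>)
  case 0
  then show ?case
    using continuous_on_compose2[of UNIV \<Gamma> UNIV \<phi>] by simp
next
  case (Suc k)
  have diff: "\<phi> differentiable (at x)" "\<Gamma> differentiable (at (\<phi> x))" for x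
    using Suc.prems by auto
  have "Ck k \<phi>"
    using Suc.prems(2) by (rule Ck_Suc_imp_Ck)
  then have "Ck k (\<lambda>x. frechet_derivative \<Gamma> (at (\<phi> x)) 1)"
    using Suc.prems(1) Suc.IH[of "\<lambda>t. frechet_derivative \<Gamma> (at t) 1" \<phi>]
    by (simp add: Ck.simps(2))
  with Suc.prems have
    "Ck k (\<lambda>x. frechet_derivative \<phi> (at x) v * frechet_derivative \<Gamma> (at (\<phi> x)) 1)" for v
    by (intro Ck_mult) auto
  moreover have "(\<lambda>y. \<Gamma> (\<phi> y)) differentiable (at x)" for x
    using differentiable_chain_at[OF diff] by (simp add: comp_def)
  ultimately show ?case
    unfolding Ck.simps(2) frechet_derivative_compose_real[OF diff(1) diff(2)] by blast
qed

lemma lie_eq_sum_partials: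
  "\<phi> differentiable (at x) \<Longrightarrow>
    lie F \<phi> x = (\<Sum>i\<in>UNIV. F x $ i * frechet_derivative \<phi> (at x) (axis i 1))"
proof -
  assume "\<phi> differentiable (at x)"
  then have lin: "linear (frechet_derivative \<phi> (at x))"
    using frechet_derivative_works has_derivative_linear by blast
  have "lie F \<phi> x = frechet_derivative \<phi> (at x) (\<Sum>i\<in>UNIV. F x $ i *\<^sub>R axis i 1)"
    unfolding lie_def using basis_expansion[of "F x"] by (simp add: scalar_mult_eq_scaleR)
  also have "\<dots> = (\<Sum>i\<in>UNIV. F x $ i * frechet_derivative \<phi> (at x) (axis i 1))"
    by (simp add: linear_sum[OF lin] linear_scale[OF lin])
  finally show ?thesis .
qed

lemma Ck_lie:
  assumes F: "\<forall>i. Ck k (\<lambda>x. F x $ i)" and \<phi>: "Ck (Suc k) \<phi>"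
  shows "Ck k (lie F \<phi>)"
proof -
  have "Ck k (\<lambda>x. \<Sum>i\<in>UNIV. F x $ i * frechet_derivative \<phi> (at x) (axis i 1))"
    using F \<phi> by (intro Ck_sum Ck_mult) simp_all
  moreover have "lie F \<phi> = (\<lambda>x. \<Sum>i\<in>UNIV. F x $ i * frechet_derivative \<phi> (at x) (axis i 1))"
    using \<phi> by (simp add: lie_eq_sum_partials fun_eq_iff)
  ultimately show ?thesis
    by simp
qed

lemma lie_at_equilibrium:
  assumes "\<phi> differentiable (at x)" and "f x + g x *v u = 0"
  shows "lie f \<phi> x = - (lie_g g \<phi> x \<bullet> u)"
proof -
  let ?D = "frechet_derivative \<phi> (at x)"
  have lin: "linear ?D"
    using assms(1) frechet_derivative_works has_derivative_linear by blast
  have "f x = - (\<Sum>j\<in>UNIV. u $ j *\<^sub>R column j (g x))"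
    using assms(2) unfolding matrix_mult_sum scalar_mult_eq_scaleR
    by (simp add: eq_neg_iff_add_eq_0)
  then have "lie f \<phi> x = - (\<Sum>j\<in>UNIV. u $ j * ?D (column j (g x)))"
    unfolding lie_def by (simp add: linear_neg[OF lin] linear_sum[OF lin] linear_scale[OF lin])
  then show ?thesis
    by (simp add: lie_g_def inner_vec_def mult.commute)
qed

declare Ck.simps(2) [simp del]

text \<open>This makes precise the paper's implicit
  claim that \<open>\<psi>\<^sub>i\<close> and its Lie derivatives depend on \<open>x\<close> only through these functions,
  which is what lets the relative degree assumption kill their \<open>L\<^sub>g\<close>-derivatives.\<close>

inductive lie_generated ::
  "(real^'n \<Rightarrow> real^'n) \<Rightarrow> (real^'n \<Rightarrow> real) \<Rightarrow> nat \<Rightarrow> nat \<Rightarrow> (real^'n \<Rightarrow> real) \<Rightarrow> bool"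
  for f h where
  iterate: "j \<le> n \<Longrightarrow> Ck s ((lie f ^^ j) h) \<Longrightarrow> lie_generated f h n s ((lie f ^^ j) h)"
| add: "lie_generated f h n s \<phi> \<Longrightarrow> lie_generated f h n s \<psi> \<Longrightarrow>
    lie_generated f h n s (\<lambda>x. \<phi> x + \<psi> x)"
| mult: "lie_generated f h n s \<phi> \<Longrightarrow> lie_generated f h n s \<psi> \<Longrightarrow>
    lie_generated f h n s (\<lambda>x. \<phi> x * \<psi> x)"
| compose: "lie_generated f h n s \<phi> \<Longrightarrow> Ck s \<Gamma> \<Longrightarrow> lie_generated f h n s (\<lambda>x. \<Gamma> (\<phi> x))"

lemma lie_generated_Ck: "lie_generated f h n s \<phi> \<Longrightarrow> Ck s \<phi>"
  by (induction rule: lie_generated.induct) (auto intro: Ck_add Ck_mult Ck_compose)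

lemma lie_generated_differentiable:
  "lie_generated f h n s \<phi> \<Longrightarrow> 1 \<le> s \<Longrightarrow> \<phi> differentiable (at x)"
  using Ck_differentiable lie_generated_Ck by blast

lemma lie_generated_mono:
  "lie_generated f h n s \<phi> \<Longrightarrow> n \<le> n' \<Longrightarrow> s' \<le> s \<Longrightarrow> lie_generated f h n' s' \<phi>"
proof (induction rule: lie_generated.induct)
  case (iterate j n s)
  then show ?case
    by (intro lie_generated.iterate) (auto elim: Ck_mono)
qed (auto intro: lie_generated.intros elim: Ck_mono)

lemma lie_generated_derivative_eq_0:
  assumes "lie_generated f h n s \<phi>" "1 \<le> s"
    and "\<forall>j\<le>n. frechet_derivative ((lie f ^^ j) h) (at x) v = 0"
  shows "frechet_derivative \<phi> (at x) v = 0"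
  using assms
proof (induction rule: lie_generated.induct)
  case (add n s \<phi> \<psi>)
  then show ?case
    by (simp add: frechet_derivative_add_at lie_generated_differentiable)
next
  case (mult n s \<phi> \<psi>)
  then show ?case
    by (simp add: frechet_derivative_mult_at lie_generated_differentiable)
next
  case (compose n s \<phi> \<Gamma>)
  then have "\<phi> differentiable (at x)" "\<Gamma> differentiable (at (\<phi> x))"
    by (auto intro: lie_generated_differentiable Ck_differentiable)
  with compose show ?case
    by (simp add: frechet_derivative_compose_real)
qed simp

lemma lie_generated_lie:
  assumes "lie_generated f h n (Suc s) \<phi>" and f: "\<forall>i. Ck s (\<lambda>x. f x $ i)"
  shows "lie_generated f h (Suc n) s (lie f \<phi>)"
  using assms(1)
proof (induction n "Suc s" \<phi> rule: lie_generated.induct)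
  case (iterate j n)
  then have "Ck s ((lie f ^^ Suc j) h)"
    using f by (simp add: Ck_lie)
  then have "lie_generated f h (Suc n) s ((lie f ^^ Suc j) h)"
    using iterate by (intro lie_generated.iterate) simp_all
  then show ?case
    by simp
next
  case (add n \<phi> \<psi>)
  then have "lie f (\<lambda>x. \<phi> x + \<psi> x) = (\<lambda>x. lie f \<phi> x + lie f \<psi> x)"
    by (simp add: lie_def fun_eq_iff frechet_derivative_add_at lie_generated_differentiable)
  with add show ?case
    by (simp add: lie_generated.add)
next
  case (mult n \<phi> \<psi>)
  then have "lie f (\<lambda>x. \<phi> x * \<psi> x) = (\<lambda>x. \<phi> x * lie f \<psi> x + lie f \<phi> x * \<psi> x)"
    by (simp add: lie_def fun_eq_iff frechet_derivative_mult_at lie_generated_differentiable)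
  moreover have "lie_generated f h (Suc n) s \<phi>" "lie_generated f h (Suc n) s \<psi>"
    using mult.hyps(1,3) by (auto elim!: lie_generated_mono)
  ultimately show ?case
    using mult.hyps(2,4) by (simp add: lie_generated.add lie_generated.mult)
next
  case (compose n \<phi> \<Gamma>)
  have "\<phi> differentiable (at x)" "\<Gamma> differentiable (at (\<phi> x))" for x
    using compose by (auto intro: lie_generated_differentiable Ck_differentiable)
  then have "lie f (\<lambda>x. \<Gamma> (\<phi> x)) = (\<lambda>x. lie f \<phi> x * frechet_derivative \<Gamma> (at (\<phi> x)) 1)"
    by (simp add: lie_def fun_eq_iff frechet_derivative_compose_real)
  moreover have "Ck s (\<lambda>t. frechet_derivative \<Gamma> (at t) 1)"
    using compose.hyps(3) by (simp add: Ck.simps(2))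
  moreover have "lie_generated f h (Suc n) s \<phi>"
    using compose.hyps(1) by (rule lie_generated_mono) simp_all
  ultimately show ?case
    using compose.hyps(2)
      lie_generated.compose[of f h "Suc n" s \<phi> "\<lambda>t. frechet_derivative \<Gamma> (at t) 1"]
    by (simp add: lie_generated.mult)
qed

lemma lie_generated_lie_pow:
  assumes "lie_generated f h n (s + k) \<phi>" and "\<forall>i. Ck (s + k - 1) (\<lambda>x. f x $ i)"
  shows "lie_generated f h (n + k) s ((lie f ^^ k) \<phi>)"
  using assms
proof (induction k arbitrary: n \<phi>)
  case (Suc k)
  then have "lie_generated f h (Suc n) (s + k) (lie f \<phi>)"
    by (intro lie_generated_lie) simp_all
  moreover have "\<forall>i. Ck (s + k - 1) (\<lambda>x. f x $ i)"
    using Suc.prems(2) Ck_mono by (metis add_Suc_right diff_Suc_1 diff_le_self)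
  ultimately have "lie_generated f h (Suc n + k) s ((lie f ^^ k) (lie f \<phi>))"
    by (rule Suc.IH)
  then show ?case
    by (simp add: funpow_Suc_right del: funpow.simps)
qed simp

lemma class_K_eq_0_iff: "class_K \<Gamma> \<Longrightarrow> \<Gamma> t = 0 \<longleftrightarrow> t = 0"
  unfolding class_K_def using strict_mono_eq[of \<Gamma> t 0] by auto

locale relative_degree_system =
  fixes f :: "real^'n \<Rightarrow> real^'n" and g :: "real^'n \<Rightarrow> real^'k^'n" and h :: "real^'n \<Rightarrow> real"
    and m :: nat and \<Gamma> :: "nat \<Rightarrow> real \<Rightarrow> real"
  assumes m_pos: "m \<ge> 1"
    and f_smooth: "\<forall>i. Ck (m - 1) (\<lambda>x. f x $ i)"
    and h_smooth: "Ck m h"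
    and rel_deg: "\<forall>i. i + 2 \<le> m \<longrightarrow> (\<forall>x. lie_g g ((lie f ^^ i) h) x = 0)"
    and Gamma_K: "\<forall>i\<in>{1..m}. class_K (\<Gamma> i)"
    and Gamma_smooth: "\<forall>i\<in>{1..m}. Ck (m - i) (\<Gamma> i)"
begin

lemma f_Ck: "k < m \<Longrightarrow> Ck k (\<lambda>x. f x $ i)"
  by (rule Ck_mono[of "m - 1"]) (use f_smooth in auto)

lemma psi_lie_generated: "k < m \<Longrightarrow> lie_generated f h k (m - k) (psi f h \<Gamma> k)"
proof (induction k)
  case 0
  then show ?case
    using lie_generated.iterate[of 0 0 m f h] h_smooth by simp
next
  case (Suc k)
  then have IH: "lie_generated f h k (Suc (m - Suc k)) (psi f h \<Gamma> k)"
    by (simp add: Suc_diff_Suc)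
  then have "lie_generated f h (Suc k) (m - Suc k) (lie f (psi f h \<Gamma> k))"
    using Suc.prems by (intro lie_generated_lie) (simp_all add: f_Ck)
  moreover have "lie_generated f h (Suc k) (m - Suc k) (psi f h \<Gamma> k)"
    using IH by (rule lie_generated_mono) simp_all
  then have "lie_generated f h (Suc k) (m - Suc k) (\<lambda>x. \<Gamma> (Suc k) (psi f h \<Gamma> k x))"
    by (rule lie_generated.compose) (use Gamma_smooth Suc.prems in auto)
  ultimately show ?case
    by (simp add: lie_generated.add)
qed

lemma lie_eq_0_at_equilibrium:
  assumes "lie_generated f h n s \<phi>" "1 \<le> s" "n + 2 \<le> m" and eq: "f x + g x *v u = 0"
  shows "lie f \<phi> x = 0"
proof -
  have "frechet_derivative ((lie f ^^ j) h) (at x) (column l (g x)) = 0" if "j \<le> n" for j l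
    using rel_deg assms(3) that unfolding lie_g_def vec_eq_iff by auto
  then have "lie_g g \<phi> x = 0"
    using assms(1,2) unfolding lie_g_def vec_eq_iff
    by (auto intro: lie_generated_derivative_eq_0)
  moreover have "\<phi> differentiable (at x)"
    using assms(1,2) by (rule lie_generated_differentiable)
  ultimately show ?thesis
    using lie_at_equilibrium[of \<phi> x f g u] eq by simp
qed

lemma cbf_term_eq_0_at_equilibrium:
  assumes eq: "f x + g x *v u = 0" and i: "1 \<le> i" "i < m"
  shows "(lie f ^^ i) (\<Gamma> (m - i) \<circ> psi f h \<Gamma> (m - i - 1)) x = 0"
proof -
  have "lie_generated f h (m - i - 1) (1 + (i - 1)) (psi f h \<Gamma> (m - i - 1))"
    using psi_lie_generated[of "m - i - 1"] i by (auto elim: lie_generated_mono)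
  moreover have "Ck (1 + (i - 1)) (\<Gamma> (m - i))"
    using Gamma_smooth[rule_format, of "m - i"] i by simp
  ultimately have
    "lie_generated f h (m - i - 1) (1 + (i - 1)) (\<Gamma> (m - i) \<circ> psi f h \<Gamma> (m - i - 1))"
    unfolding comp_def by (rule lie_generated.compose)
  then have "lie_generated f h (m - i - 1 + (i - 1)) 1
               ((lie f ^^ (i - 1)) (\<Gamma> (m - i) \<circ> psi f h \<Gamma> (m - i - 1)))"
    using f_Ck[of "i - 1"] i by (intro lie_generated_lie_pow) simp_all
  then have "lie f ((lie f ^^ (i - 1)) (\<Gamma> (m - i) \<circ> psi f h \<Gamma> (m - i - 1))) x = 0"
    by (rule lie_eq_0_at_equilibrium[OF _ _ _ eq]) (use i in simp_all)
  moreover have "i = Suc (i - 1)"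
    using i by simp
  ultimately show ?thesis
    by (metis funpow.simps(2) o_apply)
qed

lemma h_eq_0_if_psi_eq_0:
  assumes eq: "f x + g x *v u = 0"
  shows "k < m \<Longrightarrow> psi f h \<Gamma> k x = 0 \<Longrightarrow> h x = 0"
proof (induction k)
  case (Suc k)
  have "lie f (psi f h \<Gamma> k) x = 0"
    using psi_lie_generated[of k] Suc.prems(1)
    by (intro lie_eq_0_at_equilibrium[of k "m - k", OF _ _ _ eq]) simp_all
  with Suc.prems have "\<Gamma> (Suc k) (psi f h \<Gamma> k x) = 0"
    by simp
  then have "psi f h \<Gamma> k x = 0"
    using Gamma_K Suc.prems(1) class_K_eq_0_iff by auto
  with Suc show ?case
    by simp
qed simp

theorem h_eq_0_if_cbf_constraint_active:
  assumes eq: "f x + g x *v u = 0"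
    and active: "lie_g g ((lie f ^^ (m - 1)) h) x \<bullet> u
      = - (lie f ^^ m) h x - (\<Sum>i<m. (lie f ^^ i) (\<Gamma> (m - i) \<circ> psi f h \<Gamma> (m - i - 1)) x)"
  shows "h x = 0"
proof -
  let ?T = "\<lambda>i. (lie f ^^ i) (\<Gamma> (m - i) \<circ> psi f h \<Gamma> (m - i - 1)) x"
  have m: "m = Suc (m - 1)"
    using m_pos by simp
  have "lie_generated f h (0 + (m - 1)) 1 ((lie f ^^ (m - 1)) h)"
    using lie_generated.iterate[of 0 0 "1 + (m - 1)" f h] h_smooth f_smooth m
    by (intro lie_generated_lie_pow) simp_all
  then have "(lie f ^^ (m - 1)) h differentiable (at x)"
    by (rule lie_generated_differentiable) simp
  then have "lie f ((lie f ^^ (m - 1)) h) x = - (lie_g g ((lie f ^^ (m - 1)) h) x \<bullet> u)"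
    using eq by (rule lie_at_equilibrium)
  then have "lie_g g ((lie f ^^ (m - 1)) h) x \<bullet> u = - (lie f ^^ m) h x"
    by (subst m) simp
  with active have "(\<Sum>i<m. ?T i) = 0"
    by simp
  moreover have "(\<Sum>i<m. ?T i) = ?T 0 + (\<Sum>i<m - 1. ?T (Suc i))"
    by (subst m) (rule sum.lessThan_Suc_shift)
  moreover have "?T (Suc i) = 0" if "i < m - 1" for i
    using that by (intro cbf_term_eq_0_at_equilibrium[OF eq]) simp_all
  ultimately have "\<Gamma> m (psi f h \<Gamma> (m - 1) x) = 0"
    by simp
  then have "psi f h \<Gamma> (m - 1) x = 0"
    using Gamma_K m_pos class_K_eq_0_iff by auto
  then show ?thesis
    using m_pos by (intro h_eq_0_if_psi_eq_0[OF eq, of "m - 1"]) simp_all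
qed

end

lemma constrained_nearest_point_eq_if_inactive:
  fixes c u w :: "'a::real_inner"
  assumes u: "u \<in> interior U" "c \<bullet> u > \<beta>"
    and nearest: "\<forall>v\<in>U. c \<bullet> v \<ge> \<beta> \<longrightarrow> (norm (u - w))\<^sup>2 \<le> (norm (v - w))\<^sup>2"
  shows "u = w"
proof (rule ccontr)
  assume "u \<noteq> w"
  then have d: "dist u w > 0"
    by simp
  have "open (interior U \<inter> {v. c \<bullet> v > \<beta>})"
    by (intro open_Int open_interior open_halfspace_gt)
  then obtain e where e: "e > 0" "ball u e \<subseteq> interior U \<inter> {v. c \<bullet> v > \<beta>}"
    using u open_contains_ball_eq by blast
  define t where "t = min (1/2) (e / (2 * dist u w))"
  define v where "v = u + t *\<^sub>R (w - u)"
  have t: "0 < t" "t \<le> 1/2" "t * dist u w < e"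
    using d e(1) by (auto simp: t_def min_def field_simps)
  have "dist u v = t * dist u w"
    using t(1) by (simp add: v_def dist_norm norm_minus_commute)
  then have "v \<in> ball u e"
    using t(3) by simp
  then have "v \<in> interior U \<inter> {v. c \<bullet> v > \<beta>}"
    using e(2) by blast
  then have "v \<in> U" "c \<bullet> v \<ge> \<beta>"
    using interior_subset by auto
  then have "(norm (u - w))\<^sup>2 \<le> (norm (v - w))\<^sup>2"
    using nearest by blast
  moreover have "v - w = (1 - t) *\<^sub>R (u - w)"
    by (simp add: v_def algebra_simps)
  then have "norm (v - w) = (1 - t) * norm (u - w)"
    using t(2) by simp
  ultimately have "(norm (u - w))\<^sup>2 \<le> ((1 - t) * norm (u - w))\<^sup>2"
    by simp
  moreover have "((1 - t) * norm (u - w))\<^sup>2 < (norm (u - w))\<^sup>2"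
    using t d by (intro power_strict_mono) (simp_all add: dist_norm)
  ultimately show False
    by linarith
qed

theorem proposition2:
  fixes f :: "real^'nx \<Rightarrow> real^'nx"
    and g :: "real^'nx \<Rightarrow> real^'nu^'nx"
    and h :: "real^'nx \<Rightarrow> real"
    and U :: "(real^'nu) set"
    and m :: nat
    and \<Gamma> :: "nat \<Rightarrow> real \<Rightarrow> real"
    and un \<pi> :: "real^'nx \<Rightarrow> real^'nu"
    and a :: "real^'nx \<Rightarrow> real^'nu"
    and b :: "real^'nx \<Rightarrow> real"
    and xe :: "real^'nx" and ue :: "real^'nu"
  assumes m_pos: "m \<ge> 1"
    and f_lip: "\<exists>C. C-lipschitz_on UNIV f"
    and g_lip: "\<exists>C. C-lipschitz_on UNIV g"
    and f_smooth: "\<forall>i. Ck (m - 1) (\<lambda>x. f x $ i)"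
    and g_smooth: "\<forall>i j. Ck (m - 1) (\<lambda>x. g x $ i $ j)"
    and U_compact: "compact U"
    and h_smooth: "Ck m h"
    and rel_deg: "\<forall>i. i + 2 \<le> m \<longrightarrow> (\<forall>x. lie_g g ((lie f ^^ i) h) x = 0)"
    and Gamma_K: "\<forall>i\<in>{1..m}. class_K (\<Gamma> i)"
    and Gamma_smooth: "\<forall>i\<in>{1..m}. Ck (m - i) (\<Gamma> i)"
    and a_def: "\<forall>x. a x = lie_g g ((lie f ^^ (m - 1)) h) x"
    and b_def: "\<forall>x. b x = - ((lie f ^^ m) h x)
                  - (\<Sum>i<m. (lie f ^^ i) (\<Gamma> (m - i) \<circ> psi f h \<Gamma> (m - i - 1)) x)"
    and pi_feas: "\<forall>x. \<pi> x \<in> U \<and> a x \<bullet> \<pi> x \<ge> b x"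
    and pi_min: "\<forall>x. \<forall>u\<in>U. a x \<bullet> u \<ge> b x \<longrightarrow>
                   (norm (\<pi> x - un x))\<^sup>2 \<le> (norm (u - un x))\<^sup>2"
    and pi_not_bdry: "\<forall>x. \<pi> x \<notin> frontier U"
    and eq_u: "ue = \<pi> xe"
    and eq_x: "f xe + g xe *v ue = 0"
  shows "un xe = ue \<or> h xe = 0"
proof (cases "un xe = ue")
  case False
  interpret relative_degree_system f g h m \<Gamma>
    using m_pos f_smooth h_smooth rel_deg Gamma_K Gamma_smooth by unfold_locales
  have "ue \<in> interior U"
    using pi_feas pi_not_bdry eq_u closure_subset by (auto simp: frontier_def)
  have "\<not> a xe \<bullet> ue > b xe"
  proof
    assume "a xe \<bullet> ue > b xe"
    with \<open>ue \<in> interior U\<close> have "ue = un xe"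
      by (rule constrained_nearest_point_eq_if_inactive) (use pi_min eq_u in simp)
    with False show False
      by simp
  qed
  moreover have "a xe \<bullet> ue \<ge> b xe"
    using pi_feas eq_u by simp
  ultimately have "a xe \<bullet> ue = b xe"
    by simp
  then have "h xe = 0"
    using eq_x a_def b_def by (intro h_eq_0_if_cbf_constraint_active[of xe ue]) simp_all
  then show ?thesis ..
qed simp

end
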